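(* Let $S_X,S_Y$ be finite nonempty action sets and $\varphi:S_X\times S_Y\to\mathbb{R}$. Suppose $\varphi\equiv0$ is enforceable with $\lambda_{\min}=1$, i.e., there is a $(\varphi,1)$-autocratic behavioral strategy for $X$ but no $(\varphi,\lambda)$-autocratic behavioral strategy for any $\lambda\in[0,1)$. Then there exist $\tau_X^+,\tau_X^-\in\Delta(S_X)$ such that $$\max_{s_Y}\varphi(\tau_X^+,s_Y)>\min_{s_Y}\varphi(\tau_X^+,s_Y)=0=\max_{s_Y}\varphi(\tau_X^-,s_Y)>\min_{s_Y}\varphi(\tau_X^-,s_Y),$$ with maxima and minima over $s_Y\in S_Y$.
   Context: Two players $X,Y$ play a repeated game with finite action sets $S_X,S_Y$; $\Delta(S)$ denotes the probability distributions on $S$; $\varphi(\tau_X,s_Y)=\mathbb{E}_{s_X\sim\tau_X}[\varphi(s_X,s_Y)]$. Histories: $\mathcal{H}=\bigcup_{T\ge0}(S_X\times S_Y)^T$; behavioral strategies are maps $\sigma:\mathcal{H}\to\Delta(S)$; players independently draw actions each round from their strategies evaluated at the history of realized action pairs, with $\mathbb{E}_{\sigma_X,\sigma_Y}$ the expectation over the resulting play. For $\lambda\in[0,1)$, $\sigma_X$ is $(\varphi,\lambda)$-autocratic if for every behavioral strategy $\sigma_Y$, $\mathbb{E}_{\sigma_X,\sigma_Y}[(1-\lambda)\sum_{t\ge0}\lambda^t\varphi(s_X^t,s_Y^t)]=0$; it is $(\varphi,1)$-autocratic if for every $\sigma_Y$ the limit $\lim_{T\to\infty}\frac1{T+1}\sum_{t=0}^T\mathbb{E}_{\sigma_X,\sigma_Y}[\varphi(s_X^t,s_Y^t)]$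 exists and equals $0$. *)

theory Defs
  imports "HOL-Probability.Probability"
begin

type_synonym ('x, 'y) history = "('x \<times> 'y) list"

primrec play :: "(('x, 'y) history \<Rightarrow> 'x pmf) \<Rightarrow> (('x, 'y) history \<Rightarrow> 'y pmf)
    \<Rightarrow> nat \<Rightarrow> ('x, 'y) history pmf" where
  "play sX sY 0 = return_pmf []"
| "play sX sY (Suc t) =
     bind_pmf (play sX sY t) (\<lambda>h. map_pmf (\<lambda>ab. h @ [ab]) (pair_pmf (sX h) (sY h)))"

text \<open>Expected stage payoff in round t (rounds indexed from 0).\<close>
definition stage_exp :: "('x \<Rightarrow> 'y \<Rightarrow> real) \<Rightarrow> (('x, 'y) history \<Rightarrow> 'x pmf)
    \<Rightarrow> (('x, 'y) history \<Rightarrow> 'y pmf) \<Rightarrow> nat \<Rightarrow> real" where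
  "stage_exp \<phi> sX sY t =
     measure_pmf.expectation (play sX sY (Suc t)) (\<lambda>h. \<phi> (fst (last h)) (snd (last h)))"

definition autocratic :: "('x \<Rightarrow> 'y \<Rightarrow> real) \<Rightarrow> real \<Rightarrow> (('x, 'y) history \<Rightarrow> 'x pmf) \<Rightarrow> bool" where
  "autocratic \<phi> lam sX \<longleftrightarrow>
     (if lam < 1 then
        (\<forall>sY. (1 - lam) * (\<Sum>t. lam ^ t * stage_exp \<phi> sX sY t) = 0)
      else
        (\<forall>sY. (\<lambda>T. (\<Sum>t\<le>T. stage_exp \<phi> sX sY t) / real (T + 1)) \<longlonglongrightarrow> 0))"

definition mixed_payoff :: "('x \<Rightarrow> 'y \<Rightarrow> real) \<Rightarrow> 'x pmf \<Rightarrow> 'y \<Rightarrow> real" where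
  "mixed_payoff \<phi> \<tau> y = measure_pmf.expectation \<tau> (\<lambda>x. \<phi> x y)"

end

theory Submission
  imports Defs
begin

(* If X can enforce a zero long-run average payoff, some mixed action tau guarantees
   phi(tau, s_Y) >= 0 for every s_Y: otherwise, by compactness of Delta(S_X), the maximin
   value v is negative, and a Y who best-replies to X's current mixed action in every round
   holds every stage payoff, hence every running average, below v.  Applied to -phi this
   also gives a mixed action guaranteeing phi <= 0.  On the segment between the two, the
   intermediate value theorem for the continuous function tau |-> min phi(tau, .) yields
   tau+ with min 0, and symmetrically tau- with max 0.  Neither payoff profile vanishes
   identically, since playing such a tau in every round would be (phi,0)-autocratic; so
   max > min for both. *)

lemma continuous_on_Min:
  fixes f :: "'i \<Rightarrow> 'a::topological_space \<Rightarrow> 'b::linorder_topology"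
  assumes "finite I" and "I \<noteq> {}" and "\<And>i. i \<in> I \<Longrightarrow> continuous_on S (f i)"
  shows "continuous_on S (\<lambda>p. MIN i\<in>I. f i p)"
  using assms
proof (induction I rule: finite_ne_induct)
  case (singleton i)
  then show ?case by simp
next
  case (insert i I)
  then show ?case by (simp add: continuous_on_min)
qed

lemma Min_less_Max_if_ne_Min:
  fixes f :: "'a::finite \<Rightarrow> 'b::linorder"
  assumes "f y \<noteq> (MIN x. f x)"
  shows "(MIN x. f x) < (MAX x. f x)"
proof -
  have "(MIN x. f x) \<le> f y" and "f y \<le> (MAX x. f x)"
    by simp_all
  with assms show ?thesis
    by order
qed

lemma Min_less_Max_if_ne_Max:
  fixes f :: "'a::finite \<Rightarrow> 'b::linorder"
  assumes "f y \<noteq> (MAX x. f x)"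
  shows "(MIN x. f x) < (MAX x. f x)"
proof -
  have "(MIN x. f x) \<le> f y" and "f y \<le> (MAX x. f x)"
    by simp_all
  with assms show ?thesis
    by order
qed

lemma ex_pmf_eq:
  fixes p :: "'a::finite \<Rightarrow> real"
  assumes "\<And>x. 0 \<le> p x" and "sum p UNIV = 1"
  shows "\<exists>\<tau>. pmf \<tau> = p"
proof -
  have "(\<integral>\<^sup>+x. ennreal (p x) \<partial>count_space UNIV) = 1"
    using assms by (simp add: nn_integral_count_space_finite)
  then have "pmf (embed_pmf p) = p"
    using pmf_embed_pmf [of p] assms by blast
  then show ?thesis ..
qed

lemma mixed_payoff_eq_sum:
  fixes \<phi> :: "'x::finite \<Rightarrow> 'y \<Rightarrow> real"
  shows "mixed_payoff \<phi> \<tau> y = (\<Sum>x\<in>UNIV. \<phi> x y * pmf \<tau> x)"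
  unfolding mixed_payoff_def by (rule integral_measure_pmf_real) auto

lemma mixed_payoff_uminus: "mixed_payoff (\<lambda>x y. - \<phi> x y) \<tau> y = - mixed_payoff \<phi> \<tau> y"
  unfolding mixed_payoff_def by simp

lemma expectation_pair_pmf_eq_mixed_payoff:
  fixes \<phi> :: "'x::finite \<Rightarrow> 'y::finite \<Rightarrow> real"
  shows "measure_pmf.expectation (pair_pmf A B) (\<lambda>ab. \<phi> (fst ab) (snd ab))
     = measure_pmf.expectation B (mixed_payoff \<phi> A)"
proof -
  have "measure_pmf.expectation (pair_pmf A B) (\<lambda>ab. \<phi> (fst ab) (snd ab))
     = (\<Sum>ab\<in>UNIV. \<phi> (fst ab) (snd ab) * pmf (pair_pmf A B) ab)"
    by (rule integral_measure_pmf_real) auto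
  also have "\<dots> = (\<Sum>(a, b)\<in>UNIV. \<phi> a b * (pmf A a * pmf B b))"
    by (intro sum.cong refl) (simp add: pmf_pair split: prod.split)
  also have "\<dots> = (\<Sum>b\<in>UNIV. \<Sum>a\<in>UNIV. \<phi> a b * (pmf A a * pmf B b))"
    unfolding UNIV_Times_UNIV [symmetric] sum.cartesian_product [symmetric]
    by (rule sum.swap)
  also have "\<dots> = (\<Sum>b\<in>UNIV. mixed_payoff \<phi> A b * pmf B b)"
    by (simp add: mixed_payoff_eq_sum sum_distrib_right mult.assoc)
  also have "\<dots> = measure_pmf.expectation B (mixed_payoff \<phi> A)"
    by (rule integral_measure_pmf_real [symmetric]) auto
  finally show ?thesis .
qed

lemma finite_set_pmf_play:
  fixes sX :: "('x::finite, 'y::finite) history \<Rightarrow> 'x pmf"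
  shows "finite (set_pmf (play sX sY t))"
  by (induction t) (auto intro: finite_subset [OF subset_UNIV])

lemma stage_exp_eq_expectation:
  fixes \<phi> :: "'x::finite \<Rightarrow> 'y::finite \<Rightarrow> real"
  shows "stage_exp \<phi> sX sY t = measure_pmf.expectation (play sX sY t)
      (\<lambda>h. measure_pmf.expectation (sY h) (mixed_payoff \<phi> (sX h)))"
proof -
  let ?H = "set_pmf (play sX sY t)"
  have "stage_exp \<phi> sX sY t = (\<Sum>h\<in>?H. pmf (play sX sY t) h *\<^sub>R
     measure_pmf.expectation (map_pmf (\<lambda>ab. h @ [ab]) (pair_pmf (sX h) (sY h)))
        (\<lambda>h. \<phi> (fst (last h)) (snd (last h))))"
    unfolding stage_exp_def play.simps
    by (rule pmf_expectation_bind) (auto simp: finite_set_pmf_play intro: finite_subset [OF subset_UNIV])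
  also have "\<dots> = (\<Sum>h\<in>?H. measure_pmf.expectation (sY h) (mixed_payoff \<phi> (sX h)) * pmf (play sX sY t) h)"
    by (simp add: expectation_pair_pmf_eq_mixed_payoff mult.commute)
  also have "\<dots> = measure_pmf.expectation (play sX sY t)
      (\<lambda>h. measure_pmf.expectation (sY h) (mixed_payoff \<phi> (sX h)))"
    by (rule integral_measure_pmf_real [symmetric]) (auto simp: finite_set_pmf_play)
  finally show ?thesis .
qed

lemma stage_exp_le_const:
  fixes \<phi> :: "'x::finite \<Rightarrow> 'y::finite \<Rightarrow> real"
  assumes "\<And>h y. y \<in> set_pmf (sY h) \<Longrightarrow> mixed_payoff \<phi> (sX h) y \<le> c"
  shows "stage_exp \<phi> sX sY t \<le> c"
  unfolding stage_exp_eq_expectation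
  using assms
  by (intro measure_pmf.integral_le_const integrable_measure_pmf_finite AE_pmfI)
     (auto simp: finite_set_pmf_play)

lemma nonneg_if_autocratic_1_and_stage_exp_le:
  assumes "autocratic \<phi> 1 sX" and "\<And>t. stage_exp \<phi> sX sY t \<le> c"
  shows "0 \<le> c"
proof -
  have average_le: "(\<Sum>t\<le>T. stage_exp \<phi> sX sY t) / real (T + 1) \<le> c" for T
  proof -
    have "(\<Sum>t\<le>T. stage_exp \<phi> sX sY t) \<le> real (T + 1) * c"
      using sum_mono [of "{..T}" "stage_exp \<phi> sX sY" "\<lambda>_. c"] assms(2) by simp
    then show ?thesis by (simp add: divide_le_eq mult.commute)
  qed
  have "(\<lambda>T. (\<Sum>t\<le>T. stage_exp \<phi> sX sY t) / real (T + 1)) \<longlonglongrightarrow> 0"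
    using assms(1) by (simp add: autocratic_def)
  then show ?thesis
    by (rule LIMSEQ_le_const2) (use average_le in blast)
qed

lemma autocratic_1_uminus:
  assumes "autocratic \<phi> 1 sX"
  shows "autocratic (\<lambda>x y. - \<phi> x y) 1 sX"
proof -
  have "stage_exp (\<lambda>x y. - \<phi> x y) sX sY t = - stage_exp \<phi> sX sY t" for sY t
    unfolding stage_exp_def by simp
  then show ?thesis
    using assms by (auto simp: autocratic_def sum_negf intro: tendsto_minus [of _ 0, simplified])
qed

lemma autocratic_stationary_if_mixed_payoff_eq_0:
  fixes \<phi> :: "'x::finite \<Rightarrow> 'y::finite \<Rightarrow> real"
  assumes "\<And>y. mixed_payoff \<phi> \<tau> y = 0"
  shows "autocratic \<phi> lam (\<lambda>_. \<tau>)"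
proof -
  have "mixed_payoff \<phi> \<tau> = (\<lambda>_. 0)"
    using assms by auto
  then have "stage_exp \<phi> (\<lambda>_. \<tau>) sY t = 0" for sY t
    by (simp add: stage_exp_eq_expectation)
  then show ?thesis by (simp add: autocratic_def)
qed

lemma ex_maximin_mixed_action:
  fixes \<phi> :: "'x::finite \<Rightarrow> 'y::finite \<Rightarrow> real"
  shows "\<exists>\<tau>. \<forall>\<sigma>. (MIN y. mixed_payoff \<phi> \<sigma> y) \<le> (MIN y. mixed_payoff \<phi> \<tau> y)"
proof -
  define P :: "(real^'x) set" where "P = {p. (\<forall>x. 0 \<le> p $ x) \<and> (\<Sum>x\<in>UNIV. p $ x) = 1}"
  define F :: "real^'x \<Rightarrow> real" where "F p = (MIN y. \<Sum>x\<in>UNIV. \<phi> x y * p $ x)" for p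
  have F_pmf: "F (\<chi> x. pmf \<sigma> x) = (MIN y. mixed_payoff \<phi> \<sigma> y)" for \<sigma>
    by (simp add: F_def mixed_payoff_eq_sum)
  have pmf_in_P: "(\<chi> x. pmf \<sigma> x) \<in> P" for \<sigma>
    by (simp add: P_def sum_pmf_eq_1)
  have "P \<subseteq> cbox 0 1"
    by (auto simp: P_def mem_box_cart) (metis member_le_sum finite UNIV_I)
  then have "bounded P"
    using bounded_cbox bounded_subset by blast
  moreover have "closed P"
    unfolding P_def
    by (intro closed_Collect_conj closed_Collect_all closed_Collect_le closed_Collect_eq continuous_intros)
  ultimately have "compact P"
    by (simp add: compact_eq_bounded_closed)
  moreover have "continuous_on P F"
    unfolding F_def by (intro continuous_on_Min continuous_intros) auto
  ultimately obtain p where "p \<in> P" and p_max: "\<And>q. q \<in> P \<Longrightarrow> F q \<le> F p"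
    using continuous_attains_sup [of P F] pmf_in_P by blast
  then obtain \<tau> where "pmf \<tau> = (\<lambda>x. p $ x)"
    using ex_pmf_eq [of "\<lambda>x. p $ x"] by (auto simp: P_def)
  then have "p = (\<chi> x. pmf \<tau> x)"
    by (simp add: vec_eq_iff)
  then show ?thesis
    using p_max pmf_in_P F_pmf by metis
qed

lemma autocratic_1_imp_nonneg_mixed_action:
  fixes \<phi> :: "'x::finite \<Rightarrow> 'y::finite \<Rightarrow> real"
  assumes "autocratic \<phi> 1 sX"
  shows "\<exists>\<tau>. \<forall>y. 0 \<le> mixed_payoff \<phi> \<tau> y"
proof -
  obtain \<tau> where maximin: "\<And>\<sigma>. (MIN y. mixed_payoff \<phi> \<sigma> y) \<le> (MIN y. mixed_payoff \<phi> \<tau> y)"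
    using ex_maximin_mixed_action by blast
  define v where "v = (MIN y. mixed_payoff \<phi> \<tau> y)"
  have "(MIN y. mixed_payoff \<phi> \<sigma> y) \<in> range (mixed_payoff \<phi> \<sigma>)" for \<sigma>
    by (rule Min_in) auto
  then have "\<exists>y. mixed_payoff \<phi> \<sigma> y = (MIN y. mixed_payoff \<phi> \<sigma> y)" for \<sigma>
    by (metis rangeE)
  then obtain best_reply where best_reply: "\<And>\<sigma>. mixed_payoff \<phi> \<sigma> (best_reply \<sigma>) \<le> v"
    using maximin unfolding v_def by metis
  have "stage_exp \<phi> sX (\<lambda>h. return_pmf (best_reply (sX h))) t \<le> v" for t
    by (rule stage_exp_le_const) (simp add: best_reply)
  then have "0 \<le> v"
    by (rule nonneg_if_autocratic_1_and_stage_exp_le [OF assms])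
  then show ?thesis
    unfolding v_def by (auto intro: order_trans)
qed

lemma ex_mixed_payoff_convex_combination:
  fixes \<phi> :: "'x::finite \<Rightarrow> 'y \<Rightarrow> real"
  assumes "0 \<le> t" and "t \<le> 1"
  shows "\<exists>\<tau>. mixed_payoff \<phi> \<tau> = (\<lambda>y. t * mixed_payoff \<phi> A y + (1 - t) * mixed_payoff \<phi> B y)"
proof -
  have "(\<Sum>x\<in>UNIV. t * pmf A x + (1 - t) * pmf B x) = 1"
    by (simp add: sum.distrib sum_distrib_left [symmetric] sum_pmf_eq_1)
  then obtain \<tau> where \<tau>: "pmf \<tau> = (\<lambda>x. t * pmf A x + (1 - t) * pmf B x)"
    using ex_pmf_eq [of "\<lambda>x. t * pmf A x + (1 - t) * pmf B x"] assms by auto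
  have "mixed_payoff \<phi> \<tau> y = t * mixed_payoff \<phi> A y + (1 - t) * mixed_payoff \<phi> B y" for y
  proof -
    have "mixed_payoff \<phi> \<tau> y = (\<Sum>x\<in>UNIV. t * (\<phi> x y * pmf A x) + (1 - t) * (\<phi> x y * pmf B x))"
      by (simp add: mixed_payoff_eq_sum \<tau> distrib_left mult.left_commute)
    then show ?thesis
      by (simp add: mixed_payoff_eq_sum sum.distrib sum_distrib_left)
  qed
  then show ?thesis
    by (intro exI ext)
qed

lemma ex_mixed_action_Min_eq_0:
  fixes \<phi> :: "'x::finite \<Rightarrow> 'y::finite \<Rightarrow> real"
  assumes "\<And>y. 0 \<le> mixed_payoff \<phi> A y" and "\<And>y. mixed_payoff \<phi> B y \<le> 0"
  shows "\<exists>\<tau>. (MIN y. mixed_payoff \<phi> \<tau> y) = 0"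
proof -
  define M where "M t = (MIN y. t * mixed_payoff \<phi> A y + (1 - t) * mixed_payoff \<phi> B y)" for t
  have "continuous_on {0..1} M"
    unfolding M_def by (intro continuous_on_Min continuous_intros) auto
  moreover have "M 0 \<le> 0"
    using assms(2) by (auto simp: M_def Min_le_iff)
  moreover have "0 \<le> M 1"
    using assms(1) by (auto simp: M_def Min_ge_iff)
  ultimately obtain t where "0 \<le> t" "t \<le> 1" "M t = 0"
    using IVT' [of M 0 0 1] by auto
  moreover obtain \<tau> where
    "mixed_payoff \<phi> \<tau> = (\<lambda>y. t * mixed_payoff \<phi> A y + (1 - t) * mixed_payoff \<phi> B y)"
    using ex_mixed_payoff_convex_combination [OF \<open>0 \<le> t\<close> \<open>t \<le> 1\<close>] ..
  ultimately have "(MIN y. mixed_payoff \<phi> \<tau> y) = 0"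
    by (simp add: M_def)
  then show ?thesis ..
qed

lemma ex_mixed_action_Max_eq_0:
  fixes \<phi> :: "'x::finite \<Rightarrow> 'y::finite \<Rightarrow> real"
  assumes "\<And>y. 0 \<le> mixed_payoff \<phi> A y" and "\<And>y. mixed_payoff \<phi> B y \<le> 0"
  shows "\<exists>\<tau>. (MAX y. mixed_payoff \<phi> \<tau> y) = 0"
proof -
  obtain \<tau> where "(MIN y. - mixed_payoff \<phi> \<tau> y) = 0"
    using ex_mixed_action_Min_eq_0 [of "\<lambda>x y. - \<phi> x y" B A] assms
    by (auto simp: mixed_payoff_uminus)
  moreover have "- (MAX y. mixed_payoff \<phi> \<tau> y) = (MIN y. - mixed_payoff \<phi> \<tau> y)"
    by (simp add: image_image)
  ultimately have "(MAX y. mixed_payoff \<phi> \<tau> y) = 0"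
    by linarith
  then show ?thesis ..
qed

theorem lemma4:
  fixes \<phi> :: "'x::finite \<Rightarrow> 'y::finite \<Rightarrow> real"
  assumes "\<exists>sX. autocratic \<phi> 1 sX"
    and "\<forall>lam. 0 \<le> lam \<and> lam < 1 \<longrightarrow> \<not> (\<exists>sX. autocratic \<phi> lam sX)"
  shows "\<exists>\<tau>p \<tau>m :: 'x pmf.
     (MAX y. mixed_payoff \<phi> \<tau>p y) > (MIN y. mixed_payoff \<phi> \<tau>p y)
   \<and> (MIN y. mixed_payoff \<phi> \<tau>p y) = 0
   \<and> (MAX y. mixed_payoff \<phi> \<tau>m y) = 0
   \<and> (MAX y. mixed_payoff \<phi> \<tau>m y) > (MIN y. mixed_payoff \<phi> \<tau>m y)"
proof -
  obtain sX where sX: "autocratic \<phi> 1 sX"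
    using assms(1) ..
  obtain A where A: "\<And>y. 0 \<le> mixed_payoff \<phi> A y"
    using autocratic_1_imp_nonneg_mixed_action [OF sX] by blast
  obtain B where B: "\<And>y. mixed_payoff \<phi> B y \<le> 0"
    using autocratic_1_imp_nonneg_mixed_action [OF autocratic_1_uminus [OF sX]]
    by (auto simp: mixed_payoff_uminus)
  have not_identically_0: "\<exists>y. mixed_payoff \<phi> \<tau> y \<noteq> 0" for \<tau>
    using assms(2) autocratic_stationary_if_mixed_payoff_eq_0 [of \<phi> \<tau> 0] by auto
  obtain \<tau>p where \<tau>p: "(MIN y. mixed_payoff \<phi> \<tau>p y) = 0"
    using ex_mixed_action_Min_eq_0 [OF A B] by blast
  obtain \<tau>m where \<tau>m: "(MAX y. mixed_payoff \<phi> \<tau>m y) = 0"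
    using ex_mixed_action_Max_eq_0 [OF A B] by blast
  have "(MIN y. mixed_payoff \<phi> \<tau>p y) < (MAX y. mixed_payoff \<phi> \<tau>p y)"
    using not_identically_0 [of \<tau>p] \<tau>p Min_less_Max_if_ne_Min by metis
  moreover have "(MIN y. mixed_payoff \<phi> \<tau>m y) < (MAX y. mixed_payoff \<phi> \<tau>m y)"
    using not_identically_0 [of \<tau>m] \<tau>m Min_less_Max_if_ne_Max by metis
  ultimately show ?thesis
    using \<tau>p \<tau>m by blast
qed

end
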